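(* Let $G$ be a finite group and $X$ an $\mathtt{N}$-class of $G$. Then the partition of $X$ into its intersections with the $\circ$-classes of $G$ coincides with the partition of $X$ into $\diamond$-classes.
   Context: The power graph $\mathcal{P}(G)$ has vertex set $G$, and distinct $x,y$ are adjacent iff one is a positive integer power of the other. $x\mathtt{N}y$ iff $x$ and $y$ have the same closed neighbourhood in $\mathcal{P}(G)$. $x\diamond y$ iff $\langle x\rangle=\langle y\rangle$. $x\circ y$ iff $o(x)=o(y)$. Each $\mathtt{N}$-class is a union of $\diamond$-classes. *)

theory Defs
  imports "HOL-Algebra.Algebra"
begin

definition power_adj :: "('a, 'b) monoid_scheme \<Rightarrow> 'a \<Rightarrow> 'a \<Rightarrow> bool" where
  "power_adj G x y \<longleftrightarrow> x \<in> carrier G \<and> y \<in> carrier G \<and> x \<noteq> y \<and>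
     ((\<exists>n::nat. n \<ge> 1 \<and> y = x [^]\<^bsub>G\<^esub> n) \<or> (\<exists>n::nat. n \<ge> 1 \<and> x = y [^]\<^bsub>G\<^esub> n))"

definition closed_nbhd :: "('a, 'b) monoid_scheme \<Rightarrow> 'a \<Rightarrow> 'a set" where
  "closed_nbhd G x = {y \<in> carrier G. y = x \<or> power_adj G x y}"

definition relN :: "('a, 'b) monoid_scheme \<Rightarrow> 'a \<Rightarrow> 'a \<Rightarrow> bool" where
  "relN G x y \<longleftrightarrow> x \<in> carrier G \<and> y \<in> carrier G \<and> closed_nbhd G x = closed_nbhd G y"

definition rel_diamond :: "('a, 'b) monoid_scheme \<Rightarrow> 'a \<Rightarrow> 'a \<Rightarrow> bool" where
  "rel_diamond G x y \<longleftrightarrow> x \<in> carrier G \<and> y \<in> carrier G \<and> generate G {x} = generate G {y}"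

definition rel_circ :: "('a, 'b) monoid_scheme \<Rightarrow> 'a \<Rightarrow> 'a \<Rightarrow> bool" where
  "rel_circ G x y \<longleftrightarrow> x \<in> carrier G \<and> y \<in> carrier G \<and> group.ord G x = group.ord G y"

definition rel_class :: "('a, 'b) monoid_scheme \<Rightarrow> ('a \<Rightarrow> 'a \<Rightarrow> bool) \<Rightarrow> 'a \<Rightarrow> 'a set" where
  "rel_class G R x = {y \<in> carrier G. R x y}"

end

theory Submission
  imports Defs
begin

text \<open>In a finite group a nonnegative power of \<open>a\<close> can always be taken positive, so \<open>b\<close> is
  adjacent to \<open>a\<close> in the power graph iff the cyclic subgroups \<open>\<langle>a\<rangle>\<close> and \<open>\<langle>b\<rangle>\<close> are comparable.
  Hence the closed neighbourhood of \<open>a\<close> depends only on \<open>\<langle>a\<rangle>\<close>, and conversely two elements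
  with the same closed neighbourhood have comparable cyclic subgroups; if they also have the same
  order, these subgroups have the same size and therefore coincide. So each \<open>\<diamond>\<close>-class is the
  intersection of its \<open>N\<close>-class with its \<open>\<circ>\<close>-class.\<close>

context group
begin

lemma generate_singleton_subset_iff:
  assumes "a \<in> carrier G" and "b \<in> carrier G"
  shows "generate G {b} \<subseteq> generate G {a} \<longleftrightarrow> b \<in> generate G {a}"
  using assms generate_subgroup_incl[OF _ generate_is_subgroup] generate.incl[of b "{b}" G]
  by blast

lemma mem_generate_singleton_iff_pos_pow:
  assumes fin: "finite (carrier G)" and a: "a \<in> carrier G"
  shows "b \<in> generate G {a} \<longleftrightarrow> (\<exists>n::nat. n \<ge> 1 \<and> b = a [^] n)"
proof
  assume "b \<in> generate G {a}"
  then obtain k :: nat where k: "b = a [^] k"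
    using generate_pow_on_finite_carrier[OF fin a] by blast
  show "\<exists>n::nat. n \<ge> 1 \<and> b = a [^] n"
  proof (cases "k = 0")
    case True
    then have "b = a [^] ord a" using k a by simp
    then show ?thesis using ord_ge_1[OF fin a] by blast
  next
    case False
    then show ?thesis using k by (intro exI[of _ k]) simp
  qed
next
  assume "\<exists>n::nat. n \<ge> 1 \<and> b = a [^] n"
  then show "b \<in> generate G {a}"
    using generate_pow_on_finite_carrier[OF fin a] by blast
qed

lemma power_adj_iff_generate_comparable:
  assumes "finite (carrier G)"
  shows "power_adj G a b \<longleftrightarrow> a \<in> carrier G \<and> b \<in> carrier G \<and> a \<noteq> b \<and>
           (generate G {b} \<subseteq> generate G {a} \<or> generate G {a} \<subseteq> generate G {b})"
  using generate_singleton_subset_iff mem_generate_singleton_iff_pos_pow[OF assms]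
  unfolding power_adj_def by blast

lemma closed_nbhd_eq_generate_comparable:
  assumes "finite (carrier G)" and "a \<in> carrier G"
  shows "closed_nbhd G a =
           {b \<in> carrier G. generate G {b} \<subseteq> generate G {a} \<or> generate G {a} \<subseteq> generate G {b}}"
  using assms unfolding closed_nbhd_def power_adj_iff_generate_comparable[OF assms(1)] by auto

lemma generate_singleton_eq_iff:
  assumes fin: "finite (carrier G)" and a: "a \<in> carrier G" and b: "b \<in> carrier G"
  shows "generate G {a} = generate G {b} \<longleftrightarrow> closed_nbhd G a = closed_nbhd G b \<and> ord a = ord b"
proof
  assume "generate G {a} = generate G {b}"
  then show "closed_nbhd G a = closed_nbhd G b \<and> ord a = ord b"
    using closed_nbhd_eq_generate_comparable[OF fin] a b generate_pow_card[OF a]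
      generate_pow_card[OF b]
    by simp
next
  assume nbhd: "closed_nbhd G a = closed_nbhd G b \<and> ord a = ord b"
  have "b \<in> closed_nbhd G a"
    using nbhd b unfolding closed_nbhd_def by auto
  then have comparable: "generate G {b} \<subseteq> generate G {a} \<or> generate G {a} \<subseteq> generate G {b}"
    using closed_nbhd_eq_generate_comparable[OF fin a] by auto
  have finite_generate: "finite (generate G {a})" "finite (generate G {b})"
    using fin a b generate_incl by (meson empty_subsetI insert_subset rev_finite_subset)+
  have "card (generate G {a}) = card (generate G {b})"
    using nbhd generate_pow_card[OF a] generate_pow_card[OF b] by simp
  then show "generate G {a} = generate G {b}"
    using comparable finite_generate card_subset_eq by metis
qed

end

lemma rel_class_eq_if_mem:
  assumes R: "\<And>u v. R u v \<longleftrightarrow> u \<in> carrier G \<and> v \<in> carrier G \<and> f u = f v"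
    and "z \<in> rel_class G R y"
  shows "rel_class G R z = rel_class G R y"
  using assms(2) unfolding rel_class_def R by auto

lemma rel_diamond_class_eq_relN_class_inter_rel_circ_class:
  assumes "group G" and "finite (carrier G)" and "z \<in> carrier G"
  shows "rel_class G (rel_diamond G) z = rel_class G (relN G) z \<inter> rel_class G (rel_circ G) z"
  using group.generate_singleton_eq_iff[OF assms(1,2,3)] assms(3)
  unfolding rel_class_def rel_diamond_def relN_def rel_circ_def by auto

theorem mainTheorem15:
  fixes G :: "('a, 'b) monoid_scheme" and NC :: "'a set"
  assumes "group G" and "finite (carrier G)"
    and "NC \<in> {rel_class G (relN G) x | x. x \<in> carrier G}"
  shows "{NC \<inter> C | C. C \<in> {rel_class G (rel_circ G) y | y. y \<in> carrier G} \<and> NC \<inter> C \<noteq> {}}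
       = {D. D \<in> {rel_class G (rel_diamond G) y | y. y \<in> carrier G} \<and> D \<subseteq> NC}"
proof -
  obtain x where "NC = rel_class G (relN G) x"
    using assms(3) by blast
  then have NC: "rel_class G (relN G) z = NC" if "z \<in> NC" for z
    using that rel_class_eq_if_mem[OF relN_def] by metis
  have NC_carrier: "NC \<subseteq> carrier G"
    using \<open>NC = rel_class G (relN G) x\<close> unfolding rel_class_def by blast
  note diamond = rel_diamond_class_eq_relN_class_inter_rel_circ_class[OF assms(1,2)]
  show ?thesis
  proof (intro equalityI subsetI)
    fix S
    assume "S \<in> {NC \<inter> C | C. C \<in> {rel_class G (rel_circ G) y | y. y \<in> carrier G} \<and> NC \<inter> C \<noteq> {}}"
    then obtain y z where S: "S = NC \<inter> rel_class G (rel_circ G) y"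
      and z: "z \<in> NC" "z \<in> rel_class G (rel_circ G) y"
      by blast
    have "S = rel_class G (rel_diamond G) z"
      using S z NC_carrier diamond NC rel_class_eq_if_mem[OF rel_circ_def] by (metis subsetD)
    then show "S \<in> {D. D \<in> {rel_class G (rel_diamond G) y | y. y \<in> carrier G} \<and> D \<subseteq> NC}"
      using S z NC_carrier by blast
  next
    fix S
    assume "S \<in> {D. D \<in> {rel_class G (rel_diamond G) y | y. y \<in> carrier G} \<and> D \<subseteq> NC}"
    then obtain y where y: "y \<in> carrier G" "S = rel_class G (rel_diamond G) y" "S \<subseteq> NC"
      by blast
    then have "y \<in> S"
      unfolding rel_class_def rel_diamond_def by simp
    then have "S = NC \<inter> rel_class G (rel_circ G) y"
      using y diamond NC by (metis subsetD)
    with \<open>y \<in> S\<close> show "S \<in> {NC \<inter> C | C. C \<in> {rel_class G (rel_circ G) y | y. y \<in> carrier G} \<and> NC \<inter> C \<noteq> {}}"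
      using y(1) by blast
  qed
qed

end
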